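(* Let $\mathscr{H}$ be a complex Hilbert space, let $X,Y\in\mathbb{B}(\mathscr{H})$ and let $0\leq\alpha\leq1$, $0\leq\beta\leq1$. Then for every $x\in\mathscr{H}$ with $\|x\|=1$, $$|\langle Xx,x\rangle\langle Yx,x\rangle|\leq\frac{1}{4}\left\|\alpha|X|^2+(1-\alpha)|X^*|^2+\beta|Y|^2+(1-\beta)|Y^*|^2\right\|+\frac{1}{8}\left\||X|^2+|Y^*|^2\right\|+\frac{1}{4}\,w(YX).$$
   Context: $\mathbb{B}(\mathscr{H})$ denotes the algebra of bounded linear operators on $\mathscr{H}$; $\|\cdot\|$ is the operator norm. For $T\in\mathbb{B}(\mathscr{H})$, $|T|=(T^*T)^{1/2}$, and $w(T)=\sup\{|\langle Tx,x\rangle|: \|x\|=1\}$ is the numerical radius. *)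

theory Defs
  imports "HOL-Analysis.Analysis"
begin

class complex_inner = real_normed_vector +
  fixes scaleC :: "complex \<Rightarrow> 'a \<Rightarrow> 'a"
    and cinner :: "'a \<Rightarrow> 'a \<Rightarrow> complex"
  assumes scaleC_of_real: "scaleC (of_real r) x = scaleR r x"
    and scaleC_add_right: "scaleC c (x + y) = scaleC c x + scaleC c y"
    and scaleC_add_left: "scaleC (c + d) x = scaleC c x + scaleC d x"
    and scaleC_scaleC: "scaleC c (scaleC d x) = scaleC (c * d) x"
    and scaleC_one: "scaleC 1 x = x"
    and cinner_add_left: "cinner (x + y) z = cinner x z + cinner y z"
    and cinner_scaleC_left: "cinner (scaleC c x) y = c * cinner x y"
    and cinner_commute: "cinner y x = cnj (cinner x y)"
    and norm_eq_sqrt_cinner: "norm x = sqrt (Re (cinner x x))"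

class chilbert = complex_inner + complete_space

definition bounded_clinear :: "('a::complex_inner \<Rightarrow> 'a) \<Rightarrow> bool" where
  "bounded_clinear T \<longleftrightarrow> bounded_linear T \<and> (\<forall>c x. T (scaleC c x) = scaleC c (T x))"

definition adj :: "('a::complex_inner \<Rightarrow> 'a) \<Rightarrow> ('a \<Rightarrow> 'a)" where
  "adj T = (SOME S. bounded_clinear S \<and> (\<forall>x y. cinner (T x) y = cinner x (S y)))"

definition numrad :: "('a::complex_inner \<Rightarrow> 'a) \<Rightarrow> real" where
  "numrad T = (SUP x\<in>{x. norm x = 1}. cmod (cinner (T x) x))"

end

theory Submission
  imports Defs
begin

text \<open>Writing \<open>a = \<langle>Xx,x\<rangle>\<close>, \<open>b = \<langle>Yx,x\<rangle> = \<langle>x,Y\<^sup>*x\<rangle>\<close>, Buzano's inequality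
  \<open>|\<langle>u,e\<rangle>\<langle>e,v\<rangle>| \<le> (\<parallel>u\<parallel>\<parallel>v\<parallel> + |\<langle>u,v\<rangle>|)/2\<close> for \<open>u = Xx\<close>, \<open>v = Y\<^sup>*x\<close> gives
  \<open>|ab| \<le> (\<parallel>Xx\<parallel>\<parallel>Y\<^sup>*x\<parallel> + |\<langle>YXx,x\<rangle>|)/2 \<le> (\<parallel>Xx\<parallel>\<^sup>2 + \<parallel>Y\<^sup>*x\<parallel>\<^sup>2)/4 + w(YX)/2\<close>,
  while AM-GM gives \<open>|ab| \<le> (|a|\<^sup>2 + |b|\<^sup>2)/2\<close>. Since \<open>|a|\<close> is bounded by both
  \<open>\<parallel>Xx\<parallel>\<close> and \<open>\<parallel>X\<^sup>*x\<parallel>\<close>, \<open>|a|\<^sup>2 \<le> \<langle>(\<alpha>|X|\<^sup>2 + (1-\<alpha>)|X\<^sup>*|\<^sup>2)x,x\<rangle>\<close>, and similarly for \<open>b\<close>;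
  averaging the two bounds on \<open>|ab|\<close> gives the theorem.
  The adjoint is only specified by a choice operator, so its existence has to be
  established first, via the Riesz representation theorem.\<close>

lemma scaleC_zero_left [simp]: "scaleC 0 (x::'a::complex_inner) = 0"
  using scaleC_of_real[of 0 x] by simp

lemma scaleR_scaleC: "scaleR r (x::'a::complex_inner) = scaleC (of_real r) x"
  by (simp add: scaleC_of_real)

lemma cinner_zero_left [simp]: "cinner (0::'a::complex_inner) y = 0"
  using cinner_add_left[of "0::'a" 0 y] by simp

lemma cinner_minus_left: "cinner (- x::'a::complex_inner) y = - cinner x y"
proof -
  have "cinner x y + cinner (-x) y = 0" using cinner_add_left[of x "-x" y] by simp
  from minus_unique[OF this] show ?thesis by simp
qed

lemma cinner_diff_left: "cinner (x - y::'a::complex_inner) z = cinner x z - cinner y z"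
  by (metis diff_conv_add_uminus cinner_add_left cinner_minus_left)

lemma cinner_add_right: "cinner (x::'a::complex_inner) (y + z) = cinner x y + cinner x z"
  by (metis cinner_commute cinner_add_left complex_cnj_add)

lemma cinner_zero_right [simp]: "cinner (x::'a::complex_inner) 0 = 0"
  by (metis cinner_commute cinner_zero_left complex_cnj_zero)

lemma cinner_diff_right: "cinner (x::'a::complex_inner) (y - z) = cinner x y - cinner x z"
  by (metis cinner_commute cinner_diff_left complex_cnj_diff)

lemma cinner_scaleC_right: "cinner (x::'a::complex_inner) (scaleC c y) = cnj c * cinner x y"
  by (metis cinner_commute cinner_scaleC_left complex_cnj_mult)

lemma cinner_scaleR_left: "cinner (scaleR r x::'a::complex_inner) y = of_real r * cinner x y"
  by (simp add: scaleR_scaleC cinner_scaleC_left)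

lemma cinner_self: "cinner (x::'a::complex_inner) x = of_real ((norm x)^2)"
proof -
  have im: "Im (cinner x x) = 0"
    using arg_cong[where f=Im, OF cinner_commute[of x x]] by simp
  have "Re (cinner x x) \<ge> 0"
    using norm_eq_sqrt_cinner[of x] by (metis norm_ge_zero real_sqrt_ge_0_iff)
  hence "Re (cinner x x) = (norm x)^2" using norm_eq_sqrt_cinner[of x] by simp
  with im show ?thesis by (simp add: complex_eq_iff)
qed

lemma Re_cinner_self: "Re (cinner (x::'a::complex_inner) x) = (norm x)^2"
  by (simp add: cinner_self)

lemma cinner_eqI:
  fixes a b :: "'a::complex_inner"
  assumes "\<And>x. cinner x a = cinner x b"
  shows "a = b"
proof -
  have "cinner (a - b) (a - b) = 0" using assms[of "a - b"] by (simp add: cinner_diff_right)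
  hence "norm (a - b) = 0" by (simp add: cinner_self)
  thus ?thesis by simp
qed

lemma norm_diff_scaleC_sq:
  "(norm (x - scaleC a y::'a::complex_inner))^2
     = (norm x)^2 - 2 * Re (a * cinner y x) + (cmod a)^2 * (norm y)^2"
proof -
  have "cinner (x - scaleC a y) (x - scaleC a y)
     = cinner x x - cnj a * cinner x y - a * cinner y x + a * cnj a * cinner y y"
    by (simp add: cinner_diff_left cinner_diff_right cinner_scaleC_left cinner_scaleC_right
        algebra_simps)
  moreover have "Re (cnj a * cinner x y) = Re (a * cinner y x)"
    by (metis cnj.sel(1) cinner_commute complex_cnj_mult complex_cnj_cnj)
  moreover have "Re (a * cnj a * cinner y y) = (cmod a)^2 * (norm y)^2"
    by (metis cinner_self complex_norm_square Re_complex_of_real of_real_mult)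
  ultimately show ?thesis by (simp add: Re_cinner_self flip: Re_cinner_self[of "x - scaleC a y"])
qed

lemma norm_diff_projection_sq:
  fixes x y :: "'a::complex_inner"
  assumes "y \<noteq> 0"
  shows "(norm (x - scaleC (cinner x y / of_real ((norm y)^2)) y))^2
     = (norm x)^2 - (cmod (cinner x y))^2 / (norm y)^2"
proof -
  let ?c = "cinner x y" and ?a = "cinner x y / of_real ((norm y)^2)"
  have ny: "norm y > 0" using assms by simp
  have "(norm (x - scaleC ?a y))^2 = (norm x)^2 - 2 * Re (?a * cinner y x) + (cmod ?a)^2 * (norm y)^2"
    by (rule norm_diff_scaleC_sq)
  also have "?a * cinner y x = of_real ((cmod ?c)^2 / (norm y)^2)"
    using cinner_commute[of y x] complex_norm_square[of ?c] by (simp add: field_simps)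
  also have "cmod ?a = cmod ?c / (norm y)^2" by (simp add: norm_divide norm_power)
  also have "(cmod ?c / (norm y)^2)^2 * (norm y)^2 = (cmod ?c)^2 / (norm y)^2"
    using ny by (simp add: power_divide power2_eq_square)
  finally show ?thesis by simp
qed

lemma cauchy_schwarz: "cmod (cinner (x::'a::complex_inner) y) \<le> norm x * norm y"
proof (cases "y = 0")
  case True thus ?thesis by simp
next
  case False
  have "0 \<le> (norm x)^2 - (cmod (cinner x y))^2 / (norm y)^2"
    using norm_diff_projection_sq[OF False, of x] by (metis zero_le_power2)
  hence "(cmod (cinner x y))^2 \<le> (norm x * norm y)^2"
    using False by (simp add: pos_divide_le_eq power_mult_distrib)
  thus ?thesis by (simp add: power2_le_iff_abs_le)
qed

text \<open>Reflecting \<open>u\<close> in the hyperplane \<open>e\<^sup>\<bottom>\<close> gives a vector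
  \<open>u'\<close> of the same norm with \<open>\<langle>u,v\<rangle> - \<langle>u',v\<rangle> = 2\<langle>u,e\<rangle>\<langle>e,v\<rangle>\<close>.\<close>
lemma buzano:
  fixes u v e :: "'a::complex_inner"
  assumes "norm e = 1"
  shows "cmod (cinner u e * cinner e v) \<le> (norm u * norm v + cmod (cinner u v)) / 2"
proof -
  let ?c = "cinner u e"
  define u' where "u' = u - scaleC (2 * ?c) e"
  have "(norm u')^2 = (norm u)^2 - 2 * Re (2 * ?c * cinner e u) + (cmod (2 * ?c))^2 * (norm e)^2"
    unfolding u'_def by (rule norm_diff_scaleC_sq)
  also have "2 * ?c * cinner e u = of_real (2 * (cmod ?c)^2)"
    using cinner_commute[of e u] complex_norm_square[of ?c] by simp
  finally have "(norm u')^2 = (norm u)^2" using assms by (simp add: power_mult_distrib)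
  hence norm_u': "norm u' = norm u" by simp
  have "2 * (?c * cinner e v) = cinner u v - cinner u' v"
    unfolding u'_def by (simp add: cinner_diff_left cinner_scaleC_left)
  hence "cmod (2 * (?c * cinner e v)) \<le> cmod (cinner u v) + cmod (cinner u' v)"
    by (metis norm_triangle_ineq4)
  also have "cmod (cinner u' v) \<le> norm u * norm v" using cauchy_schwarz[of u' v] norm_u' by simp
  finally show ?thesis by (simp add: norm_mult)
qed

lemma parallelogram_law:
  fixes x y :: "'a::complex_inner"
  shows "(norm (x - y))^2 + (norm (x + y))^2 = 2 * (norm x)^2 + 2 * (norm y)^2"
proof -
  have "cinner (x - y) (x - y) + cinner (x + y) (x + y) = 2 * cinner x x + 2 * cinner y y"
    by (simp add: cinner_diff_left cinner_diff_right cinner_add_left cinner_add_right)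
  from arg_cong[where f = Re, OF this] show ?thesis by (simp add: Re_cinner_self)
qed

lemma minimizing_sequence_Cauchy:
  fixes M :: "'a::complex_inner set" and w :: "nat \<Rightarrow> 'a"
  assumes midpoint: "\<And>v v'. v \<in> M \<Longrightarrow> v' \<in> M \<Longrightarrow> (1/2::real) *\<^sub>R (v + v') \<in> M"
    and lower: "\<And>v. v \<in> M \<Longrightarrow> d \<le> norm v" and "0 \<le> d"
    and w: "\<And>n. w n \<in> M" "\<And>n. (norm (w n))^2 < d^2 + inverse (real (Suc n))"
  shows "Cauchy w"
proof (unfold Cauchy_def, intro allI impI)
  fix e :: real assume e: "0 < e"
  obtain N where N: "inverse (real (Suc N)) < e^2 / 4"
    using reals_Archimedean[of "e^2/4"] e by auto
  have "dist (w m) (w n) < e" if "m \<ge> N" "n \<ge> N" for m n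
  proof -
    have "d \<le> norm ((1/2::real) *\<^sub>R (w m + w n))" by (intro lower midpoint w)
    hence "(2 * d)^2 \<le> (norm (w m + w n))^2" using \<open>0 \<le> d\<close> by (intro power_mono) auto
    hence "4 * d^2 \<le> (norm (w m + w n))^2" by (simp add: power_mult_distrib)
    moreover have "inverse (real (Suc m)) \<le> inverse (real (Suc N))"
      "inverse (real (Suc n)) \<le> inverse (real (Suc N))"
      using that by (simp_all add: le_imp_inverse_le)
    ultimately have "(norm (w m - w n))^2 < e^2"
      using parallelogram_law[of "w m" "w n"] w(2)[of m] w(2)[of n] N by argo
    thus ?thesis using e by (simp add: dist_norm power_less_imp_less_base)
  qed
  thus "\<exists>N. \<forall>m\<ge>N. \<forall>n\<ge>N. dist (w m) (w n) < e" by blast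
qed

lemma exists_min_norm:
  fixes M :: "'a::chilbert set"
  assumes "M \<noteq> {}" and "closed M"
    and midpoint: "\<And>v v'. v \<in> M \<Longrightarrow> v' \<in> M \<Longrightarrow> (1/2::real) *\<^sub>R (v + v') \<in> M"
  shows "\<exists>w0\<in>M. \<forall>v\<in>M. norm w0 \<le> norm v"
proof -
  define d where "d = Inf (norm ` M)"
  have bdd: "bdd_below (norm ` M)" by (rule bdd_belowI[of _ 0]) auto
  have lower: "d \<le> norm v" if "v \<in> M" for v
    unfolding d_def using bdd that by (simp add: cInf_lower)
  have d0: "0 \<le> d" unfolding d_def using assms(1) by (intro cInf_greatest) auto
  have "\<exists>w. w \<in> M \<and> (norm w)^2 < d^2 + inverse (real (Suc n))" for n
  proof -
    have "d < sqrt (d^2 + inverse (real (Suc n)))"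
      using d0 real_sqrt_less_iff[of "d^2"] by (metis less_add_same_cancel1
          positive_imp_inverse_positive real_sqrt_abs abs_of_nonneg of_nat_0_less_iff zero_less_Suc)
    then obtain w where "w \<in> M" and "norm w < sqrt (d^2 + inverse (real (Suc n)))"
      using cInf_lessD[of "norm ` M"] assms(1) unfolding d_def by auto
    thus ?thesis by (metis norm_ge_zero real_sqrt_less_iff real_sqrt_abs abs_of_nonneg)
  qed
  then obtain w where w: "\<And>n. w n \<in> M" "\<And>n. (norm (w n))^2 < d^2 + inverse (real (Suc n))"
    by metis
  have "Cauchy w" using minimizing_sequence_Cauchy[OF midpoint lower d0 w] by blast
  then obtain w0 where lim: "w \<longlonglongrightarrow> w0" using Cauchy_convergent convergent_def by blast
  have "w0 \<in> M" using closed_sequentially[OF \<open>closed M\<close> w(1) lim] .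
  moreover have "(norm w0)^2 \<le> d^2"
  proof (rule LIMSEQ_le)
    show "(\<lambda>n. (norm (w n))^2) \<longlonglongrightarrow> (norm w0)^2" by (intro tendsto_intros lim)
    show "(\<lambda>n. d^2 + inverse (real (Suc n))) \<longlonglongrightarrow> d^2"
      using tendsto_add[OF tendsto_const LIMSEQ_inverse_real_of_nat, of "d^2"] by simp
  qed (use w(2) less_imp_le in blast)
  hence "norm w0 \<le> d" using d0 by (rule power2_le_imp_le)
  ultimately show ?thesis using lower by force
qed

lemma min_norm_orthogonal:
  fixes w k :: "'a::complex_inner"
  assumes "\<And>a. norm w \<le> norm (w - scaleC a k)"
  shows "cinner k w = 0"
proof (cases "k = 0")
  case False
  let ?a = "cinner w k / of_real ((norm k)^2)"
  have "(norm w)^2 \<le> (norm (w - scaleC ?a k))^2" using assms by (simp add: power_mono)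
  also have "\<dots> = (norm w)^2 - (cmod (cinner w k))^2 / (norm k)^2"
    by (rule norm_diff_projection_sq[OF False])
  finally have "(cmod (cinner w k))^2 / (norm k)^2 \<le> 0" by simp
  hence "cinner w k = 0" using False by (simp add: divide_le_0_iff)
  thus ?thesis by (metis cinner_commute complex_cnj_zero)
qed simp

text \<open>The representing vector is a multiple of the element of least
  norm in the closed affine hyperplane \<open>{f = 1}\<close>, which is orthogonal to \<open>ker f\<close>.\<close>
lemma riesz_representation:
  fixes f :: "'a::chilbert \<Rightarrow> complex"
  assumes add: "\<And>x y. f (x + y) = f x + f y"
    and mul: "\<And>c x. f (scaleC c x) = c * f x"
    and bnd: "\<And>x. cmod (f x) \<le> norm x * K"
  shows "\<exists>z. \<forall>x. f x = cinner x z"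
proof (cases "\<forall>x. f x = 0")
  case True thus ?thesis by (intro exI[of _ 0]) simp
next
  case False
  then obtain u where fu: "f u \<noteq> 0" by blast
  have diff: "f (u - v) = f u - f v" for u v using add[of "u - v" v] by simp
  have "bounded_linear f"
    by (rule bounded_linear_intro[OF add _ bnd]) (simp add: scaleR_scaleC mul scaleR_conv_of_real)
  hence "closed {w. f w = 1}"
    by (intro closed_Collect_eq continuous_on_const linear_continuous_on)
  moreover have "scaleC (1 / f u) u \<in> {w. f w = 1}" using fu by (simp add: mul)
  moreover have "(1/2::real) *\<^sub>R (v + v') \<in> {w. f w = 1}" if "f v = 1" "f v' = 1" for v v'
    using that by (simp add: scaleR_scaleC mul add)
  ultimately obtain w0 where fw0: "f w0 = 1" and min: "\<And>v. f v = 1 \<Longrightarrow> norm w0 \<le> norm v"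
    using exists_min_norm[of "{w. f w = 1}"] by blast
  have orth: "cinner k w0 = 0" if "f k = 0" for k
    by (rule min_norm_orthogonal) (use that fw0 in \<open>simp add: min diff mul\<close>)
  have w0: "w0 \<noteq> 0" using fw0 mul[of 0 0] by auto
  have "f x = cinner x (scaleC (1 / of_real ((norm w0)^2)) w0)" for x
  proof -
    have "cinner (x - scaleC (f x) w0) w0 = 0" by (rule orth) (simp add: diff mul fw0)
    hence "cinner x w0 = f x * of_real ((norm w0)^2)"
      by (simp add: cinner_diff_left cinner_scaleC_left cinner_self)
    thus ?thesis using w0 by (simp add: cinner_scaleC_right)
  qed
  thus ?thesis by blast
qed

lemma bounded_clinear_imp_bounded_linear: "bounded_clinear T \<Longrightarrow> bounded_linear T"
  by (simp add: bounded_clinear_def)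

lemma adj_exists:
  fixes T :: "'a::chilbert \<Rightarrow> 'a"
  assumes "bounded_clinear T"
  shows "\<exists>S. bounded_clinear S \<and> (\<forall>x y. cinner (T x) y = cinner x (S y))"
proof -
  interpret T: bounded_linear T using assms by (rule bounded_clinear_imp_bounded_linear)
  have TC: "T (scaleC c x) = scaleC c (T x)" for c x using assms by (simp add: bounded_clinear_def)
  obtain K where K0: "K \<ge> 0" and K: "\<And>x. norm (T x) \<le> norm x * K"
    using T.nonneg_bounded by blast
  have "\<exists>z. \<forall>x. cinner (T x) y = cinner x z" for y
  proof (rule riesz_representation[where K = "K * norm y"])
    show "cmod (cinner (T x) y) \<le> norm x * (K * norm y)" for x
    proof -
      have "cmod (cinner (T x) y) \<le> norm (T x) * norm y" by (rule cauchy_schwarz)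
      also have "\<dots> \<le> norm x * K * norm y" using K[of x] by (rule mult_right_mono) simp
      finally show ?thesis by (simp add: mult.assoc)
    qed
  qed (simp_all add: T.add TC cinner_add_left cinner_scaleC_left)
  then obtain S where S: "\<And>x y. cinner (T x) y = cinner x (S y)" by metis
  have Sadd: "S (a + b) = S a + S b" for a b
    by (rule cinner_eqI) (simp add: S[symmetric] cinner_add_right)
  have SC: "S (scaleC c a) = scaleC c (S a)" for c a
    by (rule cinner_eqI) (simp add: S[symmetric] cinner_scaleC_right)
  have Sbound: "norm (S y) \<le> norm y * K" for y
  proof -
    have "(norm (S y))^2 = Re (cinner (T (S y)) y)" by (simp add: S Re_cinner_self)
    also have "\<dots> \<le> cmod (cinner (T (S y)) y)" by (rule complex_Re_le_cmod)
    also have "\<dots> \<le> norm (T (S y)) * norm y" by (rule cauchy_schwarz)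
    also have "\<dots> \<le> norm (S y) * (norm y * K)"
      using mult_right_mono[OF K[of "S y"] norm_ge_zero[of y]] by (simp add: mult_ac)
    finally show ?thesis using K0 by (cases "S y = 0") (auto simp: power2_eq_square)
  qed
  have "bounded_clinear S" unfolding bounded_clinear_def
    using bounded_linear_intro[OF Sadd _ Sbound] SC by (simp add: scaleR_scaleC)
  thus ?thesis using S by blast
qed

lemma
  fixes T :: "'a::chilbert \<Rightarrow> 'a"
  assumes "bounded_clinear T"
  shows bounded_clinear_adj: "bounded_clinear (adj T)"
    and cinner_adj: "cinner (T x) y = cinner x (adj T y)"
  using someI_ex[OF adj_exists[OF assms]] unfolding adj_def[symmetric] by auto

lemma Re_cinner_adj_comp:
  fixes T :: "'a::chilbert \<Rightarrow> 'a"
  assumes "bounded_clinear T"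
  shows "Re (cinner (adj T (T z)) z) = (norm (T z))^2"
    and "Re (cinner (T (adj T z)) z) = (norm (adj T z))^2"
  by (metis Re_cinner_self cnj.sel(1) cinner_commute cinner_adj[OF assms])
     (simp add: cinner_adj[OF assms] Re_cinner_self)

lemma cmod_cinner_sq_le_convex_comb:
  fixes T :: "'a::chilbert \<Rightarrow> 'a"
  assumes "bounded_clinear T" and "norm x = 1" and "0 \<le> \<alpha>" and "\<alpha> \<le> 1"
  shows "(cmod (cinner (T x) x))^2
    \<le> Re (cinner (\<alpha> *\<^sub>R adj T (T x) + (1 - \<alpha>) *\<^sub>R T (adj T x)) x)"
proof -
  have "cmod (cinner (T x) x) \<le> norm (T x)" using cauchy_schwarz[of "T x" x] assms(2) by simp
  moreover have "cmod (cinner (T x) x) \<le> norm (adj T x)"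
    using cauchy_schwarz[of x "adj T x"] assms(2) by (simp add: cinner_adj[OF assms(1)])
  ultimately have "\<alpha> * (cmod (cinner (T x) x))^2 \<le> \<alpha> * (norm (T x))^2"
    "(1 - \<alpha>) * (cmod (cinner (T x) x))^2 \<le> (1 - \<alpha>) * (norm (adj T x))^2"
    using assms(3,4) by (simp_all add: mult_left_mono power_mono)
  moreover have "Re (cinner (\<alpha> *\<^sub>R adj T (T x) + (1 - \<alpha>) *\<^sub>R T (adj T x)) x)
      = \<alpha> * (norm (T x))^2 + (1 - \<alpha>) * (norm (adj T x))^2"
    by (simp add: cinner_add_left cinner_scaleR_left Re_cinner_adj_comp[OF assms(1)])
  ultimately show ?thesis by (simp add: algebra_simps)
qed

lemma Re_cinner_le_onorm:
  fixes f :: "'a::complex_inner \<Rightarrow> 'a"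
  assumes "bounded_linear f" and "norm x = 1"
  shows "Re (cinner (f x) x) \<le> onorm f"
  using complex_Re_le_cmod[of "cinner (f x) x"] cauchy_schwarz[of "f x" x] onorm[OF assms(1), of x]
    assms(2) by simp

lemma cmod_cinner_le_numrad:
  fixes f :: "'a::complex_inner \<Rightarrow> 'a"
  assumes "bounded_linear f" and "norm x = 1"
  shows "cmod (cinner (f x) x) \<le> numrad f"
  unfolding numrad_def
proof (rule cSUP_upper)
  have "cmod (cinner (f z) z) \<le> onorm f" if "norm z = 1" for z
    using cauchy_schwarz[of "f z" z] onorm[OF assms(1), of z] that by simp
  thus "bdd_above ((\<lambda>x. cmod (cinner (f x) x)) ` {x. norm x = 1})"
    by (intro bdd_aboveI2) auto
qed (use assms(2) in simp)

theorem mainTheorem3: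
  fixes X Y :: "'a::chilbert \<Rightarrow> 'a" and \<alpha> \<beta> :: real and x :: 'a
  assumes "bounded_clinear X" and "bounded_clinear Y"
    and "0 \<le> \<alpha>" and "\<alpha> \<le> 1" and "0 \<le> \<beta>" and "\<beta> \<le> 1"
    and "norm x = 1"
  shows "cmod (cinner (X x) x * cinner (Y x) x)
    \<le> 1/4 * onorm (\<lambda>z. \<alpha> *\<^sub>R adj X (X z) + (1 - \<alpha>) *\<^sub>R X (adj X z)
                       + \<beta> *\<^sub>R adj Y (Y z) + (1 - \<beta>) *\<^sub>R Y (adj Y z))
      + 1/8 * onorm (\<lambda>z. adj X (X z) + Y (adj Y z))
      + 1/4 * numrad (Y \<circ> X)"
    (is "?p \<le> 1/4 * onorm ?T + 1/8 * onorm ?S + 1/4 * numrad (Y \<circ> X)")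
proof -
  note lin = assms(1,2)[THEN bounded_clinear_imp_bounded_linear]
    assms(1,2)[THEN bounded_clinear_adj, THEN bounded_clinear_imp_bounded_linear]
  have "bounded_linear ?T" "bounded_linear ?S"
    by (intro bounded_linear_add bounded_linear_const_scaleR
        bounded_linear_compose[OF lin(3) lin(1)] bounded_linear_compose[OF lin(1) lin(3)]
        bounded_linear_compose[OF lin(4) lin(2)] bounded_linear_compose[OF lin(2) lin(4)])+
  note onorm_bound = this[THEN Re_cinner_le_onorm, OF assms(7)]
  let ?a = "cinner (X x) x" and ?b = "cinner (Y x) x"
  have "(cmod ?a)^2 + (cmod ?b)^2 \<le> Re (cinner (?T x) x)"
    using cmod_cinner_sq_le_convex_comb[of X x \<alpha>] cmod_cinner_sq_le_convex_comb[of Y x \<beta>] assms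
    by (simp add: cinner_add_left add_ac)
  also have "\<dots> \<le> onorm ?T" by (rule onorm_bound(1))
  finally have T: "(cmod ?a)^2 + (cmod ?b)^2 \<le> onorm ?T" .
  have "(norm (X x))^2 + (norm (adj Y x))^2 = Re (cinner (?S x) x)"
    using assms(1,2) by (simp add: cinner_add_left Re_cinner_adj_comp)
  also have "\<dots> \<le> onorm ?S" by (rule onorm_bound(2))
  finally have S: "(norm (X x))^2 + (norm (adj Y x))^2 \<le> onorm ?S" .
  have "cmod (cinner (X x) (adj Y x)) \<le> numrad (Y \<circ> X)"
    using cmod_cinner_le_numrad[OF bounded_linear_compose[OF lin(2,1)] assms(7)]
    by (simp add: cinner_adj[OF assms(2)] comp_def)
  moreover have "?p \<le> (norm (X x) * norm (adj Y x) + cmod (cinner (X x) (adj Y x))) / 2"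
    using buzano[OF assms(7), of "X x" "adj Y x"] by (simp add: cinner_adj[OF assms(2)])
  moreover have "?p \<le> ((cmod ?a)^2 + (cmod ?b)^2) / 2"
    using sum_squares_bound[of "cmod ?a" "cmod ?b"] by (simp add: norm_mult)
  ultimately show ?thesis
    using T S sum_squares_bound[of "norm (X x)" "norm (adj Y x)"] by argo
qed

end
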